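(* Let $f=a_0+ a_{1}z+\cdots+a_m z^m\in \mathbb{Z}[z]$ be primitive (the greatest common divisor of its coefficients is $1$). Suppose there exist positive real numbers $\alpha<\beta$ and an index $j\in \{0,1,\ldots,m\}$ such that \[ |a_j| \alpha^j>\sum_{i=0,\, i\neq j}^{m} |a_i|\beta^{i}. \] If there exist natural numbers $n$ and $d$ with $\beta-d\geq n\geq \alpha+d$ such that either $|f(n)|/d$ is a prime, or $|f(n)|/d$ is a prime power coprime to $|f'(n)|$, then $f$ is irreducible in $\mathbb{Z}[z]$.
   Context: $f'$ denotes the derivative of $f$. Natural numbers are positive integers. *)

theory Defs
  imports "HOL-Computational_Algebra.Computational_Algebra"
begin

end

theory Submission
  imports Defs
begin

(* The dominance of the j-th term keeps every complex root of f out of the annulus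
   \<alpha> \<le> |z| \<le> \<beta>, so all roots lie at distance more than d from n. Writing a nonconstant
   integer factor g as lc(g) times the product of the n - z over its roots gives |g(n)| > d.
   In a nontrivial factorisation f = g h, the prime power q = |f(n)|/d divides one of the
   values g(n), h(n) entirely (for a prime power, p cannot divide both because
   f' = g h' + g' h and p does not divide f'(n)), and then the other value is at most d. *)

lemma norm_root_outside_annulus:
  fixes p :: "'a::real_normed_field poly"
  assumes "j \<le> degree p" "0 \<le> \<alpha>"
    and dominant: "norm (coeff p j) * \<alpha> ^ j >
                   (\<Sum>i\<in>{0..degree p} - {j}. norm (coeff p i) * \<beta> ^ i)"
    and root: "poly p z = 0"
  shows "norm z < \<alpha> \<or> \<beta> < norm z"
proof (rule ccontr)
  assume "\<not> ?thesis"
  then have z: "\<alpha> \<le> norm z" "norm z \<le> \<beta>" by auto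
  define rest where "rest = (\<Sum>i\<in>{0..degree p} - {j}. coeff p i * z ^ i)"
  have "poly p z = coeff p j * z ^ j + rest"
    unfolding poly_altdef rest_def using assms(1)
    by (subst sum.remove[of _ j]) (auto simp: atLeast0AtMost)
  have "norm rest \<le> (\<Sum>i\<in>{0..degree p} - {j}. norm (coeff p i) * norm z ^ i)"
    unfolding rest_def by (rule order.trans[OF norm_sum]) (simp add: norm_mult norm_power)
  also have "\<dots> \<le> (\<Sum>i\<in>{0..degree p} - {j}. norm (coeff p i) * \<beta> ^ i)"
    using z by (intro sum_mono mult_left_mono power_mono) auto
  also have "\<dots> < norm (coeff p j) * \<alpha> ^ j" by (rule dominant)
  also have "\<dots> \<le> norm (coeff p j * z ^ j)"
    using z \<open>0 \<le> \<alpha>\<close> by (simp add: norm_mult norm_power mult_left_mono power_mono)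
  finally have "0 < norm (coeff p j * z ^ j + rest)"
    using norm_diff_ineq[of "coeff p j * z ^ j" rest] by linarith
  with \<open>poly p z = coeff p j * z ^ j + rest\<close> root show False by simp
qed

lemma dist_root_gt_if_dominant_coeff:
  fixes f :: "int poly" and \<alpha> \<beta> d x :: real
  assumes "j \<le> degree f" "0 \<le> \<alpha>" "0 \<le> d"
    and dominant: "\<bar>real_of_int (coeff f j)\<bar> * \<alpha> ^ j >
                   (\<Sum>i\<in>{0..degree f} - {j}. \<bar>real_of_int (coeff f i)\<bar> * \<beta> ^ i)"
    and gap: "\<alpha> + d \<le> x" "x \<le> \<beta> - d"
    and root: "poly (map_poly of_int f) z = 0"
  shows "d < cmod (of_real x - z)"
proof -
  have "cmod z < \<alpha> \<or> \<beta> < cmod z"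
    using norm_root_outside_annulus[of j "map_poly of_int f" \<alpha> \<beta> z] assms
    by (simp add: degree_map_poly coeff_map_poly)
  then show ?thesis
    using gap \<open>0 \<le> \<alpha>\<close> \<open>0 \<le> d\<close> norm_triangle_ineq2[of z "of_real x"] norm_triangle_ineq2[of "of_real x" z]
    by (auto simp: norm_minus_commute)
qed

lemma norm_poly_gt_if_roots_far:
  fixes G :: "complex poly"
  assumes "0 < degree G" "0 \<le> d" and far: "\<And>z. poly G z = 0 \<Longrightarrow> d < norm (w - z)"
  shows "norm (lead_coeff G) * d ^ degree G < norm (poly G w)"
proof -
  obtain root where decomp: "smult (lead_coeff G) (\<Prod>i<degree G. [:- root i, 1:]) = G"
    by (rule complex_poly_decompose')
  have poly_G: "poly G u = lead_coeff G * (\<Prod>i<degree G. u - root i)" for u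
    by (subst decomp[symmetric]) (simp add: poly_prod)
  have "G \<noteq> 0" using assms(1) by auto
  have root_far: "d < norm (w - root i)" if "i < degree G" for i
  proof (rule far)
    show "poly G (root i) = 0" using that by (simp add: poly_G prod_zero_iff) blast
  qed
  have "(\<Prod>i<degree G. d) < (\<Prod>i<degree G. norm (w - root i))"
    using assms(1,2) root_far le_less_trans[OF assms(2) root_far]
    by (intro prod_mono_strict[of 0]) (simp_all add: less_imp_le)
  then show ?thesis
    using \<open>G \<noteq> 0\<close> by (simp add: poly_G norm_mult prod_norm)
qed

lemma map_poly_of_int_mult:
  "(map_poly of_int (p * q) :: 'a::comm_ring_1 poly) = map_poly of_int p * map_poly of_int q"
  by (intro poly_eqI) (simp add: coeff_map_poly coeff_mult)

lemma poly_map_poly_of_int: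
  "poly (map_poly of_int p) (of_int x :: 'a::comm_ring_1) = of_int (poly p x)"
  by (induction p) (simp_all add: map_poly_pCons)

lemma abs_poly_gt_if_roots_far:
  fixes g :: "int poly" and d :: nat
  assumes "0 < degree g"
    and far: "\<And>z. poly (map_poly of_int g) z = 0 \<Longrightarrow> real d < cmod (of_int x - z)"
  shows "int d < \<bar>poly g x\<bar>"
proof -
  let ?G = "map_poly of_int g :: complex poly"
  have "degree ?G = degree g" by (simp add: degree_map_poly)
  then have "real_of_int (\<bar>lead_coeff g\<bar> * int d ^ degree g) < real_of_int \<bar>poly g x\<bar>"
    using norm_poly_gt_if_roots_far[of ?G "real d" "of_int x"] assms
    by (simp add: coeff_map_poly poly_map_poly_of_int)
  then have bound: "\<bar>lead_coeff g\<bar> * int d ^ degree g < \<bar>poly g x\<bar>"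
    by (simp only: of_int_less_iff)
  have "1 \<le> \<bar>lead_coeff g\<bar>" using assms(1) by (auto simp: int_one_le_iff_zero_less)
  have "int d \<le> int d ^ degree g"
    using assms(1) by (cases "d = 0") (simp_all add: self_le_power)
  also have "\<dots> \<le> \<bar>lead_coeff g\<bar> * int d ^ degree g"
    using \<open>1 \<le> \<bar>lead_coeff g\<bar>\<close> by (simp add: mult_le_cancel_right1)
  finally show ?thesis using bound by linarith
qed

lemma degree_pos_if_nonunit_dvd_primitive:
  fixes f g :: "'a::{semiring_gcd, idom_divide} poly"
  assumes "content f = 1" "g dvd f" "\<not> is_unit g"
  shows "0 < degree g"
proof (rule ccontr)
  assume "\<not> 0 < degree g"
  then have "g = [:coeff g 0:]" by (simp add: degree_0_id)
  with assms(1,2) have "is_unit (coeff g 0)"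
    by (metis const_poly_dvd_iff_dvd_content)
  with \<open>g = [:coeff g 0:]\<close> assms(3) show False
    by (metis is_unit_const_poly_iff)
qed

lemma prime_power_dvd_factor_value:
  fixes g h :: "'a::algebraic_semidom poly"
  assumes p: "prime_elem p" and "0 < k"
    and dvd: "p ^ k dvd poly (g * h) x"
    and coprime: "coprime (p ^ k) (poly (pderiv (g * h)) x)"
  shows "p ^ k dvd poly g x \<or> p ^ k dvd poly h x"
proof -
  have "\<not> (p dvd poly g x \<and> p dvd poly h x)"
  proof
    assume "p dvd poly g x \<and> p dvd poly h x"
    then have "p dvd poly (pderiv (g * h)) x" by (simp add: pderiv_mult)
    moreover have "p dvd p ^ k" using \<open>0 < k\<close> by simp
    ultimately have "is_unit p" using coprime coprime_common_divisor by blast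
    with p show False by (simp add: prime_elem_not_unit)
  qed
  then show ?thesis
    using prime_power_dvd_multD[OF p _ \<open>0 < k\<close>] dvd by (metis mult.commute poly_mult)
qed

lemma int_abs_le_if_cofactor_dvd:
  fixes a b q d :: int
  assumes "q dvd a" "a \<noteq> 0" "0 < q" "\<bar>a * b\<bar> = d * q"
  shows "\<bar>b\<bar> \<le> d"
proof -
  obtain u where "a = q * u" using assms(1) by (elim dvdE)
  with assms(2-4) have cofactor: "\<bar>u\<bar> * \<bar>b\<bar> = d" and "u \<noteq> 0" by (auto simp: abs_mult)
  then have "1 \<le> \<bar>u\<bar>" by (simp add: int_one_le_iff_zero_less)
  then have "\<bar>b\<bar> \<le> \<bar>u\<bar> * \<bar>b\<bar>" by (simp add: mult_le_cancel_right1)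
  with cofactor show ?thesis by simp
qed

lemma irreducible_if_value_divisor_divides_factor:
  fixes f :: "int poly" and d :: nat
  assumes primitive: "content f = 1"
    and far: "\<And>z. poly (map_poly of_int f) z = 0 \<Longrightarrow> real d < cmod (of_int x - z)"
    and "1 < q" and f_value: "\<bar>poly f x\<bar> = int d * q"
    and divides_factor: "\<And>g h. f = g * h \<Longrightarrow> q dvd poly g x \<or> q dvd poly h x"
  shows "irreducible f"
proof -
  have factor_value: "int d < \<bar>poly g x\<bar>" if "g dvd f" "\<not> is_unit g" for g
  proof (rule abs_poly_gt_if_roots_far)
    show "0 < degree g" by (rule degree_pos_if_nonunit_dvd_primitive[OF primitive that])
    from \<open>g dvd f\<close> obtain h where "f = g * h" by (elim dvdE)
    then show "real d < cmod (of_int x - z)" if "poly (map_poly of_int g) z = 0" for z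
      using far that by (simp add: map_poly_of_int_mult)
  qed
  have cofactor_small: "\<bar>poly h x\<bar> \<le> int d" if "f = g * h" "q dvd poly g x" "\<not> is_unit g" for g h
    using int_abs_le_if_cofactor_dvd[OF that(2) _ _ f_value[unfolded that(1) poly_mult]]
      factor_value[of g] that \<open>1 < q\<close> by auto
  show ?thesis
  proof (rule irreducibleI)
    show "f \<noteq> 0" using primitive by auto
    show "\<not> is_unit f"
    proof
      assume "is_unit f"
      then have "\<bar>poly f x\<bar> = 1" by (auto simp: is_unit_poly_iff)
      with f_value \<open>1 < q\<close> show False by (simp add: zmult_eq_1_iff)
    qed
    fix g h assume f: "f = g * h"
    show "is_unit g \<or> is_unit h"
    proof (rule ccontr)
      assume "\<not> ?thesis"
      moreover have "int d < \<bar>poly g x\<bar>" "int d < \<bar>poly h x\<bar>"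
        using factor_value f calculation by auto
      ultimately show False
        using divides_factor[OF f] cofactor_small[OF f] cofactor_small[of h g] f
        by (auto simp: mult.commute)
    qed
  qed
qed

theorem corollary5:
  fixes f :: "int poly"
  assumes primitive: "content f = 1"
    and dom: "\<exists>(\<alpha>::real) (\<beta>::real) j. 0 < \<alpha> \<and> \<alpha> < \<beta> \<and> j \<le> degree f \<and>
           \<bar>real_of_int (coeff f j)\<bar> * \<alpha> ^ j >
           (\<Sum>i\<in>{0..degree f} - {j}. \<bar>real_of_int (coeff f i)\<bar> * \<beta> ^ i) \<and>
           (\<exists>(n::nat) (d::nat). n > 0 \<and> d > 0 \<and>
              \<beta> - real d \<ge> real n \<and> real n \<ge> \<alpha> + real d \<and>
              ((\<exists>p::int. prime p \<and> \<bar>poly f (int n)\<bar> = int d * p) \<or>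
               (\<exists>(p::int) (k::nat). prime p \<and> k > 0 \<and> \<bar>poly f (int n)\<bar> = int d * p ^ k \<and>
                  coprime (p ^ k) \<bar>poly (pderiv f) (int n)\<bar>)))"
  shows "irreducible f"
proof -
  from dom obtain \<alpha> \<beta> :: real and j n d :: nat where
    "0 < \<alpha>" "j \<le> degree f"
    and dominant: "\<bar>real_of_int (coeff f j)\<bar> * \<alpha> ^ j >
                   (\<Sum>i\<in>{0..degree f} - {j}. \<bar>real_of_int (coeff f i)\<bar> * \<beta> ^ i)"
    and strip: "\<beta> - real d \<ge> real n" "real n \<ge> \<alpha> + real d"
    and f_value: "(\<exists>p::int. prime p \<and> \<bar>poly f (int n)\<bar> = int d * p) \<or>
               (\<exists>(p::int) (k::nat). prime p \<and> k > 0 \<and> \<bar>poly f (int n)\<bar> = int d * p ^ k \<and>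
                  coprime (p ^ k) \<bar>poly (pderiv f) (int n)\<bar>)"
    by blast
  have far: "real d < cmod (of_int (int n) - z)" if "poly (map_poly of_int f) z = 0" for z
    using dist_root_gt_if_dominant_coeff[OF \<open>j \<le> degree f\<close> _ _ dominant _ _ that, where x = "real n"]
      \<open>0 < \<alpha>\<close> strip by simp
  from f_value show ?thesis
  proof (elim disjE exE conjE)
    fix p :: int assume "prime p" and p_value: "\<bar>poly f (int n)\<bar> = int d * p"
    have "p dvd poly f (int n)" using p_value by (metis dvd_abs_iff dvd_triv_right)
    then have "p dvd poly g (int n) \<or> p dvd poly h (int n)" if "f = g * h" for g h
      using that \<open>prime p\<close> by (simp add: prime_dvd_mult_iff)
    with \<open>prime p\<close> show ?thesis
      by (intro irreducible_if_value_divisor_divides_factor[OF primitive far _ p_value])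
        (simp_all add: prime_gt_1_int)
  next
    fix p :: int and k :: nat
    assume "prime p" "0 < k" and pk_value: "\<bar>poly f (int n)\<bar> = int d * p ^ k"
      and "coprime (p ^ k) \<bar>poly (pderiv f) (int n)\<bar>"
    have "p ^ k dvd poly f (int n)" using pk_value by (metis dvd_abs_iff dvd_triv_right)
    then have "p ^ k dvd poly g (int n) \<or> p ^ k dvd poly h (int n)" if "f = g * h" for g h
      using that \<open>0 < k\<close> \<open>coprime (p ^ k) \<bar>poly (pderiv f) (int n)\<bar>\<close>
      by (intro prime_power_dvd_factor_value[OF prime_imp_prime_elem[OF \<open>prime p\<close>]]) simp_all
    with \<open>prime p\<close> \<open>0 < k\<close> show ?thesis
      by (intro irreducible_if_value_divisor_divides_factor[OF primitive far _ pk_value])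
        (simp_all add: prime_gt_1_int)
  qed
qed

end
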